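(* Let $b,n\ge1$ and $1\le c\le b$ be integers and let $p_1,\dots,p_b\ge 0$ satisfy $p_1=p_2=\dots=p_c>p_{c+1}\ge p_{c+2}\ge\dots\ge p_b$. Then for every integer $\tilde c$ with $1\le\tilde c\le c$ and every integer $k$ with $0\le k\le n(b-1)$, $$\frac{\Pr(\mathrm{DBS}(\tilde c))}{\tilde c^{\,n}}\ \ge\ \frac{\Pr(\mathrm{LDS}_{\le k})}{|\mathrm{LDS}_{\le k}|}.$$
   Context: Search-tree model: a complete $b$-ary tree of depth $n$ whose leaves are identified with sequences $(j_1,\dots,j_n)\in\{1,\dots,b\}^n$. Given reals $p_1,\dots,p_b\ge0$, the success probability of a leaf is $\prod_{i=1}^n p_{j_i}$, and for a set $S$ of leaves, $\Pr(S)=\sum_{(j_1,\dots,j_n)\in S}\prod_{i=1}^n p_{j_i}$; $|S|$ is the number of leaves in $S$. For $1\le c\le b$, $\mathrm{DBS}(c)=\{1,\dots,c\}^n$ (so $|\mathrm{DBS}(c)|=c^n$ and $\Pr(\mathrm{DBS}(c))=(\sum_{i=1}^c p_i)^n$). The discrepancy of a leaf $(j_1,\dots,j_n)$ is $\sum_{i=1}^n (j_i-1)$, and $\mathrm{LDS}_{\le k}$ is the set of leaves of discrepancy at most $k$. *)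

theory Defs
  imports "HOL-Library.FuncSet" Complex_Main
begin

text \<open>Leaves of the complete b-ary tree of depth n: sequences (j_0,...,j_{n-1}) with entries in {1..b},
  represented as extensional functions on {0..<n}.\<close>
definition leaves :: "nat \<Rightarrow> nat \<Rightarrow> (nat \<Rightarrow> nat) set" where
  "leaves b n = PiE {0..<n} (\<lambda>_. {1..b})"

definition leaf_prob :: "(nat \<Rightarrow> real) \<Rightarrow> nat \<Rightarrow> (nat \<Rightarrow> nat) \<Rightarrow> real" where
  "leaf_prob p n j = (\<Prod>i<n. p (j i))"

definition Pr :: "(nat \<Rightarrow> real) \<Rightarrow> nat \<Rightarrow> (nat \<Rightarrow> nat) set \<Rightarrow> real" where
  "Pr p n S = (\<Sum>j\<in>S. leaf_prob p n j)"

definition DBS :: "nat \<Rightarrow> nat \<Rightarrow> (nat \<Rightarrow> nat) set" where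
  "DBS c n = leaves c n"

definition discrepancy :: "nat \<Rightarrow> (nat \<Rightarrow> nat) \<Rightarrow> nat" where
  "discrepancy n j = (\<Sum>i<n. j i - 1)"

definition LDS_le :: "nat \<Rightarrow> nat \<Rightarrow> nat \<Rightarrow> (nat \<Rightarrow> nat) set" where
  "LDS_le b n k = {j \<in> leaves b n. discrepancy n j \<le> k}"

end

theory Submission
  imports Defs
begin

(* The leaves of DBS(c') only use the maximal probability p_1 = ... = p_c', so each of them has
   success probability p_1^n, the largest possible value of a leaf. Hence DBS(c') attains the
   average p_1^n, while the average over any set of leaves, LDS_{<=k} in particular, is at most
   p_1^n. *)

lemma card_leaves: "card (leaves b n) = b ^ n"
  unfolding leaves_def by (simp add: card_PiE)

lemma leaves_entry_bounds:
  assumes "j \<in> leaves b n" and "i < n"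
  shows "1 \<le> j i" and "j i \<le> b"
  using assms unfolding leaves_def by (auto simp: PiE_def Pi_def)

lemma leaf_prob_le_power:
  assumes "j \<in> leaves b n" and "\<And>i. 1 \<le> i \<Longrightarrow> i \<le> b \<Longrightarrow> 0 \<le> p i \<and> p i \<le> M"
  shows "leaf_prob p n j \<le> M ^ n"
proof -
  have "(\<Prod>i<n. p (j i)) \<le> (\<Prod>i<n. M)"
    by (intro prod_mono) (use assms leaves_entry_bounds in auto)
  then show ?thesis unfolding leaf_prob_def by simp
qed

lemma leaf_prob_eq_power:
  assumes "j \<in> leaves c n" and "\<And>i. 1 \<le> i \<Longrightarrow> i \<le> c \<Longrightarrow> p i = M"
  shows "leaf_prob p n j = M ^ n"
proof -
  have "(\<Prod>i<n. p (j i)) = (\<Prod>i<n. M)"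
    by (intro prod.cong refl) (use assms leaves_entry_bounds in auto)
  then show ?thesis unfolding leaf_prob_def by simp
qed

lemma Pr_DBS_constant:
  assumes "\<And>i. 1 \<le> i \<Longrightarrow> i \<le> c \<Longrightarrow> p i = M"
  shows "Pr p n (DBS c n) = real c ^ n * M ^ n"
  using leaf_prob_eq_power[OF _ assms] card_leaves[of c n]
  unfolding Pr_def DBS_def by simp

lemma Pr_average_le_power:
  assumes "S \<subseteq> leaves b n" and "M \<ge> 0"
    and "\<And>i. 1 \<le> i \<Longrightarrow> i \<le> b \<Longrightarrow> 0 \<le> p i \<and> p i \<le> M"
  shows "Pr p n S / real (card S) \<le> M ^ n"
proof (cases "card S = 0")
  case True
  then show ?thesis using \<open>M \<ge> 0\<close> by simp
next
  case False
  have "Pr p n S \<le> real (card S) * M ^ n"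
    unfolding Pr_def
    by (rule sum_bounded_above) (use assms leaf_prob_le_power in blast)
  then show ?thesis using False by (simp add: divide_le_eq mult.commute)
qed

lemma plateau_then_decreasing_le_first:
  fixes p :: "nat \<Rightarrow> real"
  assumes "\<And>i. 1 \<le> i \<Longrightarrow> i \<le> c \<Longrightarrow> p i = p 1" and "1 \<le> c"
    and "c < b \<Longrightarrow> p c \<ge> p (c + 1)"
    and "\<And>i. c + 1 \<le> i \<Longrightarrow> i < b \<Longrightarrow> p i \<ge> p (i + 1)"
    and "1 \<le> i" and "i \<le> b"
  shows "p i \<le> p 1"
proof (cases "i \<le> c")
  case True
  then show ?thesis using assms(1)[of i] assms(5) by simp
next
  case False
  then have "c + 1 \<le> i" by simp
  then have "p i \<le> p (c + 1)"
  proof (induction i rule: dec_induct)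
    case (step m)
    then show ?case using assms(4)[of m] \<open>i \<le> b\<close> by simp
  qed simp
  also have "p (c + 1) \<le> p c" using assms(3) False \<open>i \<le> b\<close> by simp
  also have "p c = p 1" using assms(1)[of c] assms(2) by simp
  finally show ?thesis by simp
qed

theorem theorem2:
  fixes b n c c' k :: nat and p :: "nat \<Rightarrow> real"
  assumes "b \<ge> 1" and "n \<ge> 1" and "1 \<le> c" and "c \<le> b"
    and "\<And>i. 1 \<le> i \<Longrightarrow> i \<le> b \<Longrightarrow> p i \<ge> 0"
    and "\<And>i. 1 \<le> i \<Longrightarrow> i \<le> c \<Longrightarrow> p i = p 1"
    and "c < b \<Longrightarrow> p c > p (c + 1)"
    and "\<And>i. c + 1 \<le> i \<Longrightarrow> i < b \<Longrightarrow> p i \<ge> p (i + 1)"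
    and "1 \<le> c'" and "c' \<le> c"
    and "k \<le> n * (b - 1)"
  shows "Pr p n (DBS c' n) / real c' ^ n
           \<ge> Pr p n (LDS_le b n k) / real (card (LDS_le b n k))"
proof -
  have bounded: "0 \<le> p i \<and> p i \<le> p 1" if "1 \<le> i" "i \<le> b" for i
    using assms(5)[OF that] plateau_then_decreasing_le_first[of c p b i] assms(3,6,7,8) that
    by (blast intro: less_imp_le)
  have "Pr p n (DBS c' n) = real c' ^ n * p 1 ^ n"
    by (intro Pr_DBS_constant assms(6)) (use assms(10) in auto)
  then have DBS_average: "Pr p n (DBS c' n) / real c' ^ n = p 1 ^ n"
    using assms(9) by simp
  have "LDS_le b n k \<subseteq> leaves b n" unfolding LDS_le_def by blast
  then have "Pr p n (LDS_le b n k) / real (card (LDS_le b n k)) \<le> p 1 ^ n"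
    by (rule Pr_average_le_power) (use bounded[of 1] assms(1) in simp, fact bounded)
  then show ?thesis unfolding DBS_average .
qed

end
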